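(* Suppose Assumption A2 holds and $f$ is continuously differentiable, let $\beta>0$, and let $(x(t),y(t))$, $t\ge0$, be the solution of the prediction-correction dynamics $$\dot x=-F(x,y),\qquad \dot y=-[\nabla^2_{yy}g(x,y)]^{-1}\big[\beta\nabla_y g(x,y)+\nabla^2_{yx}g(x,y)\dot x\big].$$ Then for all $t\ge0$, $$\|y(t)-y^\star(x(t))\|\le\frac{1}{\mu_g}\|\nabla_y g(x(0),y(0))\|e^{-\beta t}.$$
   Context: $f,g:\mathbb{R}^n\times\mathbb{R}^m\to\mathbb{R}$; $\nabla^2_{yx}g(x,y)\in\mathbb{R}^{m\times n}$ is the Jacobian with respect to $x$ of $\nabla_y g(x,y)$, $\nabla^2_{yy}g$ the Hessian in $y$. Assumption A2: $g$ is twice continuously differentiable; $g(x,\cdot)$ is $\mu_g$-strongly convex for each $x$; $\nabla_y g(x,\cdot)$ is $L^g_{yy}$-Lipschitz for each $x$ and $\nabla_y g(\cdot,y)$ is $L^g_{yx}$-Lipschitz for each $y$; $\nabla^2_{yx}g$, $\nabla^2_{yy}g$ are Lipschitz on $\mathbb{R}^n\times\mathbb{R}^m$. $y^\star(x):=\arg\min_y g(x,y)$ and $F(x,y):=\nabla_x f(x,y)-\nabla^2_{yx}g(x,y)^\top[\nabla^2_{yy}g(x,y)]^{-1}\nabla_y f(x,y)$. *)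

theory Defs
  imports "HOL-Analysis.Analysis"
begin

definition strongly_convex_on :: "real \<Rightarrow> 'a::real_normed_vector set \<Rightarrow> ('a \<Rightarrow> real) \<Rightarrow> bool" where
  "strongly_convex_on mu S h \<longleftrightarrow> convex S \<and>
     (\<forall>u\<in>S. \<forall>v\<in>S. \<forall>t::real. 0 \<le> t \<and> t \<le> 1 \<longrightarrow>
        h (t *\<^sub>R u + (1 - t) *\<^sub>R v) \<le> t * h u + (1 - t) * h v - mu / 2 * t * (1 - t) * (norm (u - v))\<^sup>2)"

definition ystar :: "('a \<Rightarrow> 'b \<Rightarrow> real) \<Rightarrow> 'a \<Rightarrow> 'b" where
  "ystar g x = arg_min (g x) (\<lambda>_. True)"

text \<open>F(x,y) = grad_x f - (Hyx g)^T (Hyy g)^{-1} grad_y f, with the derivatives passed as functions.\<close>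
definition Fhyper ::
  "(real^'n \<Rightarrow> real^'m \<Rightarrow> real^'n) \<Rightarrow> (real^'n \<Rightarrow> real^'m \<Rightarrow> real^'m)
   \<Rightarrow> (real^'n \<Rightarrow> real^'m \<Rightarrow> real^'n^'m) \<Rightarrow> (real^'n \<Rightarrow> real^'m \<Rightarrow> real^'m^'m)
   \<Rightarrow> real^'n \<Rightarrow> real^'m \<Rightarrow> real^'n" where
  "Fhyper fx fy Hyx Hyy x y = fx x y - transpose (Hyx x y) *v (matrix_inv (Hyy x y) *v fy x y)"

end

theory Submission
  imports Defs
begin

(* Along the dynamics the gradient h(t) = grad_y g(x(t), y(t)) satisfies
   h' = Hyx x' + Hyy y' = -beta h whatever x' is: the y-equation is built to cancel the
   drift of the minimiser. Strong convexity makes Hyy positive definite, hence invertible,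
   so this holds for all t and h(t) = exp(-beta t) h(0). Finally, strong convexity of g(x, .)
   together with grad_y g(x, ystar x) = 0 gives mu_g |y - ystar x| <= |grad_y g(x, y)|. *)

lemma strongly_convex_on_first_order:
  fixes G :: "'a::real_inner \<Rightarrow> real"
  assumes deriv: "(G has_derivative (\<lambda>k. D \<bullet> k)) (at v)"
    and sc: "strongly_convex_on mu UNIV G"
  shows "G v + D \<bullet> (u - v) + mu / 2 * (norm (u - v))\<^sup>2 \<le> G u"
proof -
  define d where "d = u - v"
  have "((\<lambda>s. v + s *\<^sub>R d) has_derivative (\<lambda>s. s *\<^sub>R d)) (at 0)"
    by (auto intro!: derivative_eq_intros)
  from diff_chain_at[OF this, of G "\<lambda>k. D \<bullet> k"] deriv
  have "((\<lambda>s. G (v + s *\<^sub>R d)) has_real_derivative (D \<bullet> d)) (at 0)"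
    by (simp add: o_def has_field_derivative_def mult.commute[of _ "D \<bullet> d"])
  then have slope: "((\<lambda>s. (G (v + s *\<^sub>R d) - G v) / s) \<longlongrightarrow> D \<bullet> d) (at_right 0)"
    unfolding has_field_derivative_iff by (auto intro: tendsto_mono at_le)
  have chord: "((\<lambda>s. G u - G v - mu / 2 * (1 - s) * (norm d)\<^sup>2)
      \<longlongrightarrow> G u - G v - mu / 2 * (1 - 0) * (norm d)\<^sup>2) (at_right 0)"
    by (intro tendsto_intros)
  have "eventually (\<lambda>s. (G (v + s *\<^sub>R d) - G v) / s \<le> G u - G v - mu / 2 * (1 - s) * (norm d)\<^sup>2)
      (at_right (0::real))"
    using eventually_at_right_real[OF zero_less_one]
  proof (rule eventually_mono)
    fix s :: real
    assume s: "s \<in> {0<..<1}"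
    have "v + s *\<^sub>R d = s *\<^sub>R u + (1 - s) *\<^sub>R v"
      by (simp add: d_def algebra_simps)
    moreover have "G (s *\<^sub>R u + (1 - s) *\<^sub>R v)
        \<le> s * G u + (1 - s) * G v - mu / 2 * s * (1 - s) * (norm (u - v))\<^sup>2"
      using sc s unfolding strongly_convex_on_def by auto
    ultimately have "G (v + s *\<^sub>R d) - G v \<le> s * (G u - G v - mu / 2 * (1 - s) * (norm d)\<^sup>2)"
      by (simp add: d_def algebra_simps)
    with s show "(G (v + s *\<^sub>R d) - G v) / s \<le> G u - G v - mu / 2 * (1 - s) * (norm d)\<^sup>2"
      by (simp add: divide_le_eq mult.commute)
  qed
  from tendsto_le[OF trivial_limit_at_right_real chord slope this]
  show ?thesis by (simp add: d_def)
qed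

lemma strongly_convex_on_gradient_monotone:
  fixes G :: "'a::real_inner \<Rightarrow> real"
  assumes deriv: "\<And>v. (G has_derivative (\<lambda>k. Dg v \<bullet> k)) (at v)"
    and sc: "strongly_convex_on mu UNIV G"
  shows "mu * (norm (u - v))\<^sup>2 \<le> (Dg u - Dg v) \<bullet> (u - v)"
  using strongly_convex_on_first_order[OF deriv sc, of u v]
    strongly_convex_on_first_order[OF deriv sc, of v u]
  by (simp add: inner_diff_left inner_diff_right norm_minus_commute inner_commute algebra_simps)

lemma strongly_convex_on_second_derivative_ge:
  fixes G :: "'a::real_inner \<Rightarrow> real"
  assumes deriv: "\<And>v. (G has_derivative (\<lambda>k. Dg v \<bullet> k)) (at v)"
    and sc: "strongly_convex_on mu UNIV G"
    and deriv2: "(Dg has_derivative H) (at b)"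
  shows "mu * (norm k)\<^sup>2 \<le> H k \<bullet> k"
proof -
  have "((\<lambda>s. b + s *\<^sub>R k) has_derivative (\<lambda>s. s *\<^sub>R k)) (at 0)"
    by (auto intro!: derivative_eq_intros)
  from diff_chain_at[OF this, of Dg H] deriv2
  have "((\<lambda>s. Dg (b + s *\<^sub>R k) \<bullet> k) has_derivative (\<lambda>s. H (s *\<^sub>R k) \<bullet> k)) (at 0)"
    by (auto simp: o_def intro!: derivative_eq_intros)
  moreover have "H (s *\<^sub>R k) = s *\<^sub>R H k" for s
    using deriv2 has_derivative_bounded_linear linear_cmul bounded_linear.linear by blast
  ultimately have "((\<lambda>s. Dg (b + s *\<^sub>R k) \<bullet> k) has_real_derivative (H k \<bullet> k)) (at 0)"
    by (simp add: has_field_derivative_def mult.commute[of _ "H k \<bullet> k"])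
  then have slope: "((\<lambda>s. (Dg (b + s *\<^sub>R k) \<bullet> k - Dg b \<bullet> k) / s) \<longlongrightarrow> H k \<bullet> k) (at_right 0)"
    unfolding has_field_derivative_iff by (auto intro: tendsto_mono at_le)
  have "eventually (\<lambda>s. mu * (norm k)\<^sup>2 \<le> (Dg (b + s *\<^sub>R k) \<bullet> k - Dg b \<bullet> k) / s)
      (at_right (0::real))"
    using eventually_at_right_real[OF zero_less_one]
  proof (rule eventually_mono)
    fix s :: real
    assume s: "s \<in> {0<..<1}"
    have "s * (s * (mu * (norm k)\<^sup>2)) \<le> s * (Dg (b + s *\<^sub>R k) \<bullet> k - Dg b \<bullet> k)"
      using strongly_convex_on_gradient_monotone[OF deriv sc, of "b + s *\<^sub>R k" b] s
      by (simp add: inner_diff_left power2_eq_square algebra_simps)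
    with s show "mu * (norm k)\<^sup>2 \<le> (Dg (b + s *\<^sub>R k) \<bullet> k - Dg b \<bullet> k) / s"
      by (simp add: le_divide_eq mult.commute mult_le_cancel_left)
  qed
  from tendsto_lowerbound[OF slope this] show ?thesis by simp
qed

lemma strongly_convex_on_is_arg_min:
  fixes G :: "'a::euclidean_space \<Rightarrow> real"
  assumes deriv: "\<And>v. (G has_derivative (\<lambda>k. Dg v \<bullet> k)) (at v)"
    and sc: "strongly_convex_on mu UNIV G" and mu: "mu > 0"
  shows "is_arg_min G (\<lambda>_. True) (arg_min G (\<lambda>_. True))"
proof -
  define R where "R = 2 * norm (Dg 0) / mu"
  have "R \<ge> 0"
    using mu by (simp add: R_def)
  moreover have "continuous_on (cball 0 R) G"
    using deriv by (meson continuous_at_imp_continuous_on has_derivative_continuous)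
  ultimately obtain z where z: "z \<in> cball 0 R" "\<And>w. w \<in> cball 0 R \<Longrightarrow> G z \<le> G w"
    using continuous_attains_inf[OF compact_cball, of 0 R G] by auto
  txt \<open>Outside the ball the quadratic growth of G beats its linear decrease from 0.\<close>
  have "G z \<le> G w" for w
  proof (cases "w \<in> cball 0 R")
    case False
    then have "mu / 2 * norm w > norm (Dg 0)" "norm w > 0"
      using mu \<open>R \<ge> 0\<close> by (auto simp: R_def field_simps)
    then have "norm (Dg 0) * norm w < mu / 2 * (norm w)\<^sup>2"
      by (simp add: power2_eq_square)
    moreover have "- (norm (Dg 0) * norm w) \<le> Dg 0 \<bullet> w"
      using norm_cauchy_schwarz[of "- Dg 0" w] by simp
    ultimately have "G 0 < G w"
      using strongly_convex_on_first_order[OF deriv sc, where u = w and v = 0] by simp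
    then show ?thesis
      using z(2)[of 0] \<open>R \<ge> 0\<close> by simp
  qed (use z in auto)
  then have "is_arg_min G (\<lambda>_. True) z"
    by (auto simp: is_arg_min_def not_less)
  then show ?thesis
    unfolding arg_min_def by (rule someI)
qed

lemma strongly_convex_on_dist_arg_min_le:
  fixes G :: "'a::euclidean_space \<Rightarrow> real"
  assumes deriv: "\<And>v. (G has_derivative (\<lambda>k. Dg v \<bullet> k)) (at v)"
    and sc: "strongly_convex_on mu UNIV G" and mu: "mu > 0"
  shows "mu * norm (y - arg_min G (\<lambda>_. True)) \<le> norm (Dg y)"
proof -
  define m where "m = arg_min G (\<lambda>_. True)"
  have "G m \<le> G w" for w
    using strongly_convex_on_is_arg_min[OF deriv sc mu]
    by (auto simp: m_def is_arg_min_def not_less)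
  then have "(\<lambda>k. Dg m \<bullet> k) = (\<lambda>k. 0)"
    by (intro has_derivative_local_min[OF deriv]) auto
  then have "Dg m = 0"
    by (metis inner_eq_zero_iff)
  then have "mu * (norm (y - m))\<^sup>2 \<le> norm (Dg y) * norm (y - m)"
    using strongly_convex_on_gradient_monotone[OF deriv sc, of y m] norm_cauchy_schwarz[of "Dg y" "y - m"]
    by simp
  then show ?thesis
    by (cases "y = m") (auto simp: m_def power2_eq_square)
qed

lemma has_derivative_partial_snd:
  assumes "((\<lambda>p. F (fst p) (snd p)) has_derivative (\<lambda>(h, k). A h + B k)) (at (a, b))"
    and "linear A"
  shows "(F a has_derivative B) (at b)"
proof -
  have "((\<lambda>y. (a, y)) has_derivative (\<lambda>k. (0, k))) (at b)"
    by (auto intro!: derivative_eq_intros)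
  from diff_chain_at[OF this assms(1)] show ?thesis
    using linear_0[OF assms(2)] by (simp add: o_def)
qed

lemma invertible_if_coercive:
  fixes A :: "real^'n^'n"
  assumes "\<And>k. mu * (norm k)\<^sup>2 \<le> (A *v k) \<bullet> k" and "mu > 0"
  shows "invertible A"
proof -
  have "k = 0" if "A *v k = 0" for k
    using assms(1)[of k] assms(2) that by (simp add: mult_le_0_iff)
  then show ?thesis
    by (simp add: invertible_left_inverse matrix_left_invertible_ker)
qed

lemma matrix_inv_right:
  fixes A :: "real^'n^'n"
  assumes "invertible A"
  shows "A *v (matrix_inv A *v w) = w"
proof -
  have "A ** matrix_inv A = mat 1 \<and> matrix_inv A ** A = mat 1"
    using assms unfolding matrix_inv_def invertible_def by (rule someI_ex)
  then show ?thesis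
    by (simp add: matrix_vector_mul_assoc)
qed

lemma has_vector_derivative_linear_scalar_ode:
  fixes h :: "real \<Rightarrow> 'a::real_normed_vector"
  assumes ode: "\<And>t. t \<ge> 0 \<Longrightarrow> (h has_vector_derivative c *\<^sub>R h t) (at t within {0..})"
    and t: "t \<ge> 0"
  shows "h t = exp (c * t) *\<^sub>R h 0"
proof -
  have "((\<lambda>s. exp (- c * s) *\<^sub>R h s) has_derivative (\<lambda>_. 0)) (at s within {0..})" if "s \<ge> 0" for s
  proof -
    have "((\<lambda>s. exp (- c * s)) has_real_derivative - c * exp (- c * s)) (at s within {0..})"
      by (auto intro!: derivative_eq_intros)
    from has_vector_derivative_scaleR[OF this ode[OF that]]
    show ?thesis
      by (simp add: has_vector_derivative_def algebra_simps)
  qed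
  then have "exp (- c * t) *\<^sub>R h t = exp (- c * 0) *\<^sub>R h 0"
    using has_derivative_zero_constant[of "{0::real..}" "\<lambda>s. exp (- c * s) *\<^sub>R h s"] t
    by (metis atLeast_iff convex_real_interval(1) order_refl)
  then have const: "exp (- c * t) *\<^sub>R h t = h 0"
    by simp
  have "h t = exp (c * t) *\<^sub>R (exp (- c * t) *\<^sub>R h t)"
    by (simp flip: exp_add)
  with const show ?thesis
    by simp
qed

lemma gradient_has_vector_derivative_along_correction:
  fixes gy :: "real^'n \<Rightarrow> real^'m \<Rightarrow> real^'m"
    and x :: "real \<Rightarrow> real^'n" and y :: "real \<Rightarrow> real^'m"
  assumes gy_deriv: "((\<lambda>p. gy (fst p) (snd p)) has_derivative
        (\<lambda>(h, k). Hyx (x t) (y t) *v h + Hyy (x t) (y t) *v k)) (at (x t, y t))"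
    and inv: "invertible (Hyy (x t) (y t))"
    and x_deriv: "(x has_vector_derivative X') (at t within S)"
    and y_deriv: "(y has_vector_derivative
        - (matrix_inv (Hyy (x t) (y t)) *v (beta *\<^sub>R gy (x t) (y t) + Hyx (x t) (y t) *v X')))
        (at t within S)"
  shows "((\<lambda>t. gy (x t) (y t)) has_vector_derivative - beta *\<^sub>R gy (x t) (y t)) (at t within S)"
proof -
  define Y' where "Y' = - (matrix_inv (Hyy (x t) (y t)) *v (beta *\<^sub>R gy (x t) (y t) + Hyx (x t) (y t) *v X'))"
  have "((\<lambda>t. (x t, y t)) has_derivative (\<lambda>s. (s *\<^sub>R X', s *\<^sub>R Y'))) (at t within S)"
    using has_derivative_Pair[OF x_deriv[unfolded has_vector_derivative_def]
        y_deriv[folded Y'_def, unfolded has_vector_derivative_def]] .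
  from diff_chain_within[OF this has_derivative_at_withinI[OF gy_deriv]]
  have "((\<lambda>t. gy (x t) (y t)) has_derivative
      (\<lambda>s. s *\<^sub>R (Hyx (x t) (y t) *v X' + Hyy (x t) (y t) *v Y'))) (at t within S)"
    by (simp add: o_def matrix_vector_mult_scaleR scaleR_right_distrib)
  moreover have "Hyy (x t) (y t) *v Y' = - (beta *\<^sub>R gy (x t) (y t) + Hyx (x t) (y t) *v X')"
    using matrix_inv_right[OF inv] by (simp add: Y'_def linear_neg[OF matrix_vector_mul_linear])
  ultimately show ?thesis
    by (simp add: has_vector_derivative_def)
qed

theorem proposition2:
  fixes f g :: "real^'n \<Rightarrow> real^'m \<Rightarrow> real"
    and fx gx :: "real^'n \<Rightarrow> real^'m \<Rightarrow> real^'n"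
    and fy gy :: "real^'n \<Rightarrow> real^'m \<Rightarrow> real^'m"
    and Hxx :: "real^'n \<Rightarrow> real^'m \<Rightarrow> real^'n^'n"
    and Hxy :: "real^'n \<Rightarrow> real^'m \<Rightarrow> real^'m^'n"
    and Hyx :: "real^'n \<Rightarrow> real^'m \<Rightarrow> real^'n^'m"
    and Hyy :: "real^'n \<Rightarrow> real^'m \<Rightarrow> real^'m^'m"
    and mu_g L_yy L_yx beta :: real
    and x :: "real \<Rightarrow> real^'n" and y :: "real \<Rightarrow> real^'m"
  assumes
    \<comment> \<open>f continuously differentiable, with gradient blocks fx, fy\<close>
    f_deriv: "\<And>a b. ((\<lambda>p. f (fst p) (snd p)) has_derivative
                 (\<lambda>(h, k). fx a b \<bullet> h + fy a b \<bullet> k)) (at (a, b))"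
    and f_cont: "continuous_on UNIV (\<lambda>p. fx (fst p) (snd p))"
                "continuous_on UNIV (\<lambda>p. fy (fst p) (snd p))"
    \<comment> \<open>Assumption A2: g twice continuously differentiable\<close>
    and g_deriv: "\<And>a b. ((\<lambda>p. g (fst p) (snd p)) has_derivative
                 (\<lambda>(h, k). gx a b \<bullet> h + gy a b \<bullet> k)) (at (a, b))"
    and gx_deriv: "\<And>a b. ((\<lambda>p. gx (fst p) (snd p)) has_derivative
                 (\<lambda>(h, k). Hxx a b *v h + Hxy a b *v k)) (at (a, b))"
    and gy_deriv: "\<And>a b. ((\<lambda>p. gy (fst p) (snd p)) has_derivative
                 (\<lambda>(h, k). Hyx a b *v h + Hyy a b *v k)) (at (a, b))"
    and H_cont: "continuous_on UNIV (\<lambda>p. Hxx (fst p) (snd p))"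
                "continuous_on UNIV (\<lambda>p. Hxy (fst p) (snd p))"
                "continuous_on UNIV (\<lambda>p. Hyx (fst p) (snd p))"
    "continuous_on UNIV (\<lambda>p. Hyy (fst p) (snd p))"
    \<comment> \<open>Assumption A2: strong convexity and Lipschitz conditions\<close>
    and mu_pos: "mu_g > 0"
    and g_sc: "\<And>a. strongly_convex_on mu_g UNIV (g a)"
    and gy_lip_y: "\<And>a. L_yy-lipschitz_on UNIV (gy a)"
    and gy_lip_x: "\<And>b. L_yx-lipschitz_on UNIV (\<lambda>a. gy a b)"
    and Hyx_lip: "\<exists>L. L-lipschitz_on UNIV (\<lambda>p. Hyx (fst p) (snd p))"
    and Hyy_lip: "\<exists>L. L-lipschitz_on UNIV (\<lambda>p. Hyy (fst p) (snd p))"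
    \<comment> \<open>the prediction-correction dynamics\<close>
    and beta_pos: "beta > 0"
    and x_ode: "\<And>t. t \<ge> 0 \<Longrightarrow>
       (x has_vector_derivative - Fhyper fx fy Hyx Hyy (x t) (y t)) (at t within {0..})"
    and y_ode: "\<And>t. t \<ge> 0 \<Longrightarrow>
       (y has_vector_derivative
          - (matrix_inv (Hyy (x t) (y t)) *v
               (beta *\<^sub>R gy (x t) (y t) + Hyx (x t) (y t) *v (- Fhyper fx fy Hyx Hyy (x t) (y t)))))
         (at t within {0..})"
  shows "\<forall>t\<ge>0. norm (y t - ystar g (x t))
            \<le> (1 / mu_g) * norm (gy (x 0) (y 0)) * exp (- beta * t)"
proof (intro allI impI)
  fix t :: real
  assume t: "t \<ge> 0"
  have g_partial: "(g a has_derivative (\<lambda>k. gy a b \<bullet> k)) (at b)" for a b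
    by (rule has_derivative_partial_snd[OF g_deriv]) (simp add: bounded_linear_inner_right bounded_linear.linear)
  have gy_partial: "(gy a has_derivative (\<lambda>k. Hyy a b *v k)) (at b)" for a b
    by (rule has_derivative_partial_snd[OF gy_deriv]) (simp add: matrix_vector_mul_linear)
  have "invertible (Hyy a b)" for a b
    using strongly_convex_on_second_derivative_ge[OF g_partial g_sc gy_partial] mu_pos
    by (rule invertible_if_coercive)
  then have "gy (x t) (y t) = exp (- beta * t) *\<^sub>R gy (x 0) (y 0)"
    using x_ode y_ode gy_deriv t
    by (intro has_vector_derivative_linear_scalar_ode[where h = "\<lambda>t. gy (x t) (y t)"]
        gradient_has_vector_derivative_along_correction) auto
  moreover have "mu_g * norm (y t - ystar g (x t)) \<le> norm (gy (x t) (y t))"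
    unfolding ystar_def by (rule strongly_convex_on_dist_arg_min_le[OF g_partial g_sc mu_pos])
  ultimately show "norm (y t - ystar g (x t)) \<le> (1 / mu_g) * norm (gy (x 0) (y 0)) * exp (- beta * t)"
    using mu_pos by (simp add: field_simps)
qed

end
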